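(* Let $l\in\mathbb N$ and let $\overline{\Xi_l^{\pm}}\subset\mathbb{CP}^2_{(\mu:r:\theta)}$ be the projective closures of the affine curves $\Xi_l^\pm$. Then for $l\geq 4$ the only real singular points of $\overline{\Xi_l^{\pm}}$ are the two points $p_\pm=(1:\pm1:0)$; for $l=1,2$ the curves $\overline{\Xi_l^{\pm}}$ are smooth; and for $l=3$ the only real singular point of $\overline{\Xi_3^{+}}$ is $p_-$ and the only real singular point of $\overline{\Xi_3^{-}}$ is $p_+$ ($p_+$ being a smooth point of $\overline{\Xi_3^+}$ and $p_-$ a smooth point of $\overline{\Xi_3^-}$). In particular, the real affine curves $\Xi_l^\pm(\mathbb R)$ are smooth.
   Context: For $l\in\mathbb N$ and $\mu\in\mathbb C$, let $\mathcal G_l$ be the $l\times l$ matrix with entries $(\mathcal G_l)_{i,l+1-i}=\mu$ for $i=1,\dots,l$, $(\mathcal G_l)_{i,l+2-i}=-(l+1-i)$ for $i=2,\dots,l$, and all other entries zero. Let $\Xi_l^\pm=\{(\mu,r)\in\mathbb C^2:\det(\mathcal G_l\pm r\,\mathrm{Id})=0\}$. The projective closure is taken in $\mathbb{CP}^2$ with homogeneous coordinates $(\mu:r:\theta)$, the affine chart being $\theta=1$; real points are those with real homogeneous coordinates. *)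

theory Defs
  imports Complex_Main "Jordan_Normal_Form.Determinant"
begin

text \<open>Bivariate complex polynomials in (mu, r) are represented as
  complex poly poly: the outer variable is r, the inner (coefficient) variable is mu.
  Matrix rows/columns are 0-indexed (paper index i corresponds to i-1).\<close>

definition Gmat :: "nat \<Rightarrow> complex poly poly mat" where
  "Gmat l = mat l l (\<lambda>(i, j).
     if j = l - 1 - i then [:[:0, 1:]:]
     else if 1 \<le> i \<and> j = l - i then [:[: - of_nat (l - i) :]:]
     else 0)"

text \<open>det (G_l + s r Id), s = 1 gives Xi^+, s = -1 gives Xi^-.\<close>
definition Xi_poly :: "nat \<Rightarrow> complex \<Rightarrow> complex poly poly" where
  "Xi_poly l s = det (Gmat l + [:0, [:s:]:] \<cdot>\<^sub>m 1\<^sub>m l)"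

definition aff_eval :: "complex poly poly \<Rightarrow> complex \<Rightarrow> complex \<Rightarrow> complex" where
  "aff_eval P mu r = poly (map_poly (\<lambda>q. poly q mu) P) r"

definition bcoeff :: "complex poly poly \<Rightarrow> nat \<Rightarrow> nat \<Rightarrow> complex" where
  "bcoeff P i j = coeff (coeff P j) i"

definition tdeg :: "complex poly poly \<Rightarrow> nat" where
  "tdeg P = Max {i + j | i j. bcoeff P i j \<noteq> 0}"

text \<open>Homogenization: defining polynomial of the projective closure in CP^2 with
  coordinates (mu : r : theta).\<close>
definition homog :: "complex poly poly \<Rightarrow> complex \<Rightarrow> complex \<Rightarrow> complex \<Rightarrow> complex" where
  "homog P mu r th = (\<Sum>j\<le>degree P. \<Sum>i\<le>degree (coeff P j).
      bcoeff P i j * mu ^ i * r ^ j * th ^ (tdeg P - i - j))"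

definition proj_singular ::
  "(complex \<Rightarrow> complex \<Rightarrow> complex \<Rightarrow> complex) \<Rightarrow> complex \<Rightarrow> complex \<Rightarrow> complex \<Rightarrow> bool" where
  "proj_singular F a b c \<longleftrightarrow> (a, b, c) \<noteq> (0, 0, 0) \<and> F a b c = 0 \<and>
     ((\<lambda>x. F x b c) has_field_derivative 0) (at a) \<and>
     ((\<lambda>y. F a y c) has_field_derivative 0) (at b) \<and>
     ((\<lambda>z. F a b z) has_field_derivative 0) (at c)"

definition real_proj_singular :: "complex poly poly \<Rightarrow> real \<Rightarrow> real \<Rightarrow> real \<Rightarrow> bool" where
  "real_proj_singular P a b c \<longleftrightarrow> proj_singular (homog P) (of_real a) (of_real b) (of_real c)"

definition is_point_1s0 :: "real \<Rightarrow> real \<Rightarrow> real \<Rightarrow> real \<Rightarrow> bool" where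
  "is_point_1s0 s a b c \<longleftrightarrow> (\<exists>t. t \<noteq> 0 \<and> a = t \<and> b = s * t \<and> c = 0)"

end

(*
  Relabelling the rows and columns of G_l + s r Id (s = 1 or -1) in the order 0, l-1, 1, l-2, ...
  makes it tridiagonal, so det(G_l + s r Id) is a continuant: p_0 = 1, p_1 = s r,
  p_(k+2) = s r p_(k+1) - w_k p_k, with weights w_k = mu^2 for even k and
  (k div 2 + 1) (l - 1 - k div 2) for odd k, the central entry of the anti-diagonals entering
  only the last step.  Homogenising multiplies the constant weights by theta^2 and the constant
  central entry by theta.

  Real affine points are smooth because, as a polynomial in r, the continuant has only simple
  real roots.  For mu <> 0 all weights are positive and the Wronskian
  W_k = p'_(k+1) p_k - p_(k+1) p'_k satisfies s W_(k+1) = p_(k+1)^2 + w_k (s W_k) > 0.  For mu = 0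
  the even weights vanish and the continuant factors into distinct quadratics r^2 - j (l - j)
  and linear terms.  Consequently every real singular point of the projective closure lies on
  the line theta = 0, where the form reduces to (s r + mu)^[l odd] (r^2 - mu^2)^(l div 2).  Its
  singular points are the zeros of r^2 - mu^2 as soon as l div 2 >= 2, i.e. l >= 4; for l = 3
  only the square factor s r + mu = 0 survives, and for l = 1, 2 the curve is a line or a
  smooth conic.
*)

theory Submission
  imports Defs
begin

section \<open>Continuants\<close>

fun continuant :: "(nat \<Rightarrow> 'a) \<Rightarrow> (nat \<Rightarrow> 'a) \<Rightarrow> nat \<Rightarrow> 'a::comm_ring_1" where
  "continuant d e 0 = 1"
| "continuant d e (Suc 0) = d 0"
| "continuant d e (Suc (Suc n)) = d (Suc n) * continuant d e (Suc n) - e n * continuant d e n"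

lemma continuant_cong:
  "(\<And>i. i < n \<Longrightarrow> d i = d' i) \<Longrightarrow> (\<And>k. Suc k < n \<Longrightarrow> e k = e' k) \<Longrightarrow>
    continuant d e n = continuant d' e' n"
  by (induction d e n rule: continuant.induct) auto

lemma continuant_update_last:
  assumes "\<And>i. i < n \<Longrightarrow> d' i = d i" and "d' n = d n + t"
  shows "continuant d' e (Suc n) = continuant d e (Suc n) + t * continuant d e n"
proof (cases n)
  case (Suc m)
  have "continuant d' e k = continuant d e k" if "k \<le> n" for k
    using assms(1) that by (intro continuant_cong) auto
  then show ?thesis
    using assms(2) Suc by (simp add: algebra_simps)
qed (use assms in simp)

lemma continuant_scale:
  "continuant (\<lambda>i. c * d i) (\<lambda>k. c\<^sup>2 * e k) n = c ^ n * continuant d e n"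
  by (induction d e n rule: continuant.induct) (simp_all add: algebra_simps power2_eq_square)

lemma continuant_const_even_weights:
  "continuant (\<lambda>_. x) (\<lambda>k. if even k then y else 0) n = (if even n then 1 else x) * (x\<^sup>2 - y) ^ (n div 2)"
  by (induction n rule: induct_nat_012) (auto simp: algebra_simps power2_eq_square)

lemma (in comm_ring_hom) hom_continuant:
  "hom (continuant d e n) = continuant (\<lambda>i. hom (d i)) (\<lambda>k. hom (e k)) n"
  by (induction d e n rule: continuant.induct) (simp_all add: hom_distribs)

lemma continuous_continuant:
  fixes d e :: "'b::t2_space \<Rightarrow> nat \<Rightarrow> 'a::{real_normed_algebra_1, comm_ring_1}"
  assumes "\<And>i. continuous F (\<lambda>x. d x i)" and "\<And>k. continuous F (\<lambda>x. e x k)"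
  shows "continuous F (\<lambda>x. continuant (d x) (e x) n)"
  by (induction n rule: induct_nat_012) (auto intro!: continuous_intros assms)

definition tridiagonal_mat :: "nat \<Rightarrow> (nat \<Rightarrow> 'a) \<Rightarrow> (nat \<Rightarrow> 'a) \<Rightarrow> (nat \<Rightarrow> 'a) \<Rightarrow> 'a::zero mat" where
  "tridiagonal_mat n d u v = mat n n (\<lambda>(i, j).
     if i = j then d i else if j = Suc i then u i else if i = Suc j then v j else 0)"

lemma tridiagonal_mat_carrier [simp]: "tridiagonal_mat n d u v \<in> carrier_mat n n"
  by (simp add: tridiagonal_mat_def)

lemma det_tridiagonal_mat_Suc_Suc:
  fixes d u v :: "nat \<Rightarrow> 'a::comm_ring_1"
  shows "det (tridiagonal_mat (Suc (Suc n)) d u v) =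
    d (Suc n) * det (tridiagonal_mat (Suc n) d u v) - u n * v n * det (tridiagonal_mat n d u v)"
proof -
  let ?A = "tridiagonal_mat (Suc (Suc n)) d u v"
  define B where "B = mat_delete ?A (Suc n) n"
  have B: "B \<in> carrier_mat (Suc n) (Suc n)"
    unfolding B_def using mat_delete_carrier[OF tridiagonal_mat_carrier[of "Suc (Suc n)"]] by simp
  have "det B = (\<Sum>i<Suc n. B $$ (i, n) * cofactor B i n)"
    by (rule laplace_expansion_column[OF B]) simp
  also have "\<dots> = u n * det (mat_delete B n n)"
    by (simp add: B_def mat_delete_def tridiagonal_mat_def cofactor_def)
  also have "mat_delete B n n = tridiagonal_mat n d u v"
    by (rule eq_matI) (auto simp: B_def mat_delete_def tridiagonal_mat_def)
  finally have det_B: "det B = u n * det (tridiagonal_mat n d u v)" .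
  have minor: "mat_delete ?A (Suc n) (Suc n) = tridiagonal_mat (Suc n) d u v"
    by (rule eq_matI) (auto simp: mat_delete_def tridiagonal_mat_def)
  have "det ?A = (\<Sum>j<Suc (Suc n). ?A $$ (Suc n, j) * cofactor ?A (Suc n) j)"
    by (rule laplace_expansion_row) auto
  also have "\<dots> = v n * cofactor ?A (Suc n) n + d (Suc n) * cofactor ?A (Suc n) (Suc n)"
    by (simp add: tridiagonal_mat_def)
  also have "\<dots> = v n * (- det B) + d (Suc n) * det (tridiagonal_mat (Suc n) d u v)"
    by (simp add: cofactor_def minor flip: B_def)
  finally show ?thesis
    using det_B by (simp add: algebra_simps)
qed

lemma det_tridiagonal_mat:
  fixes d u v :: "nat \<Rightarrow> 'a::comm_ring_1"
  shows "det (tridiagonal_mat n d u v) = continuant d (\<lambda>k. u k * v k) n"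
proof (induction n rule: induct_nat_012)
  case 0
  show ?case by (simp add: det_dim_zero)
next
  case 1
  show ?case by (subst det_single) (auto simp: tridiagonal_mat_def)
qed (simp add: det_tridiagonal_mat_Suc_Suc)

definition continuant_poly :: "(nat \<Rightarrow> 'a) \<Rightarrow> 'a \<Rightarrow> (nat \<Rightarrow> 'a) \<Rightarrow> nat \<Rightarrow> 'a::comm_ring_1 poly" where
  "continuant_poly \<delta> s w n = continuant (\<lambda>i. [:\<delta> i, s:]) (\<lambda>k. [:w k:]) n"

lemma (in comm_ring_hom) comm_ring_hom_map_poly: "comm_ring_hom (map_poly hom)"
  by unfold_locales (auto intro!: poly_eqI simp: coeff_map_poly coeff_mult hom_distribs)

lemma comm_ring_hom_poly: "comm_ring_hom (\<lambda>p. poly p x)"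
  by unfold_locales simp_all

lemma (in comm_ring_hom) map_poly_continuant_poly:
  "map_poly hom (continuant_poly \<delta> s w n) = continuant_poly (\<lambda>i. hom (\<delta> i)) (hom s) (\<lambda>k. hom (w k)) n"
  unfolding continuant_poly_def comm_ring_hom.hom_continuant[OF comm_ring_hom_map_poly]
  by (simp add: map_poly_pCons)

lemma poly_continuant_poly:
  "poly (continuant_poly \<delta> s w n) x = continuant (\<lambda>i. \<delta> i + s * x) w n"
  unfolding continuant_poly_def comm_ring_hom.hom_continuant[OF comm_ring_hom_poly]
  by (simp add: mult.commute)

lemma continuant_poly_degree_coeff:
  "degree (continuant_poly \<delta> s w n) \<le> n \<and> coeff (continuant_poly \<delta> s w n) n = s ^ n"
proof (induction n rule: induct_nat_012)
  case (ge2 n)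
  let ?p = "continuant_poly \<delta> s w"
  have rec: "?p (Suc (Suc n)) = smult (\<delta> (Suc n)) (?p (Suc n)) + pCons 0 (smult s (?p (Suc n)))
      - smult (w n) (?p n)"
    by (simp add: continuant_poly_def)
  have "coeff (?p (Suc n)) (Suc (Suc n)) = 0" "coeff (?p n) (Suc (Suc n)) = 0"
    using ge2 by (auto intro: coeff_eq_0)
  moreover have "degree (?p (Suc (Suc n))) \<le> Suc (Suc n)"
    unfolding rec using ge2
    by (intro degree_diff_le degree_add_le) (auto intro: order.trans[OF degree_smult_le])
  ultimately show ?case
    using ge2 by (simp add: rec)
qed (simp_all add: continuant_poly_def)

lemma pderiv_linear: "pderiv [:a, s:] = [:s:]"
  by (simp add: pderiv_pCons)

(* The Wronskian obeys W_(k+1) = s p_(k+1)^2 + w_k W_k. *)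
lemma continuant_poly_wronskian_pos:
  fixes \<delta> w :: "nat \<Rightarrow> real"
  assumes "s \<noteq> 0" "\<And>j. j < k \<Longrightarrow> 0 < w j"
  shows "0 < s * poly (pderiv (continuant_poly \<delta> s w (Suc k)) * continuant_poly \<delta> s w k
    - continuant_poly \<delta> s w (Suc k) * pderiv (continuant_poly \<delta> s w k)) x"
  using assms(2)
proof (induction k)
  case 0
  show ?case
    using assms(1) by (simp add: continuant_poly_def pderiv_linear flip: power2_eq_square)
next
  case (Suc k)
  let ?p = "continuant_poly \<delta> s w"
  let ?W = "\<lambda>k. pderiv (?p (Suc k)) * ?p k - ?p (Suc k) * pderiv (?p k)"
  have "?p (Suc (Suc k)) = [:\<delta> (Suc k), s:] * ?p (Suc k) - [:w k:] * ?p k"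
    by (simp add: continuant_poly_def)
  then have "?W (Suc k) = pderiv ([:\<delta> (Suc k), s:] * ?p (Suc k) - [:w k:] * ?p k) * ?p (Suc k)
      - ([:\<delta> (Suc k), s:] * ?p (Suc k) - [:w k:] * ?p k) * pderiv (?p (Suc k))"
    by (simp only:)
  also have "\<dots> = smult s (?p (Suc k) * ?p (Suc k)) + smult (w k) (?W k)"
    by (simp add: pderiv_mult pderiv_diff pderiv_add pderiv_smult pderiv_pCons smult_diff_right algebra_simps)
  finally have "s * poly (?W (Suc k)) x = (s * poly (?p (Suc k)) x)\<^sup>2 + w k * (s * poly (?W k) x)"
    by (simp add: algebra_simps power2_eq_square)
  moreover have "0 < w k * (s * poly (?W k) x)"
    using Suc by simp
  ultimately show ?case
    by (smt (verit) zero_le_power2)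
qed

lemma rsquarefree_continuant_poly:
  fixes \<delta> w :: "nat \<Rightarrow> real"
  assumes "s \<noteq> 0" "\<And>j. j < k \<Longrightarrow> 0 < w j"
  shows "rsquarefree (continuant_poly \<delta> s w (Suc k))"
proof -
  have "0 < s * poly (pderiv (continuant_poly \<delta> s w (Suc k)) * continuant_poly \<delta> s w k
      - continuant_poly \<delta> s w (Suc k) * pderiv (continuant_poly \<delta> s w k)) x" for x
    using assms by (rule continuant_poly_wronskian_pos)
  then show ?thesis
    unfolding rsquarefree_roots by (metis diff_zero mult_zero_left mult_zero_right poly_diff poly_mult order_less_irrefl)
qed

lemma continuant_poly_odd_step:
  assumes "w (2 * j) = 0"
  shows "continuant_poly (\<lambda>_. 0) s w (2 * Suc j + 1)
    = [:- w (2 * j + 1), 0, s\<^sup>2:] * continuant_poly (\<lambda>_. 0) s w (2 * j + 1)"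
proof -
  have "2 * Suc j + 1 = Suc (Suc (Suc (2 * j)))" "2 * j + 1 = Suc (2 * j)"
    by simp_all
  then show ?thesis
    using assms by (simp only:) (simp add: continuant_poly_def algebra_simps power2_eq_square)
qed

section \<open>The determinant as a continuant\<close>

lemma det_permute_rows_and_cols:
  assumes A: "A \<in> carrier_mat n n" and p: "p permutes {0..<n}"
  shows "det (mat n n (\<lambda>(i, j). A $$ (p i, p j))) = det A"
proof -
  define B where "B = mat n n (\<lambda>(i, j). A $$ (i, p j))"
  have B: "B \<in> carrier_mat n n" by (simp add: B_def)
  have p_less: "i < n \<Longrightarrow> p i < n" for i
    using p by (simp add: permutes_in_image)
  have "B\<^sup>T = mat n n (\<lambda>(i, j). A\<^sup>T $$ (p i, j))"
    by (rule eq_matI) (use A in \<open>auto simp: B_def p_less\<close>)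
  then have det_B: "det B = signof p * det A"
    using det_permute_rows[of "A\<^sup>T" n p] A p det_transpose[OF B] det_transpose[OF A] by auto
  have "mat n n (\<lambda>(i, j). A $$ (p i, p j)) = mat n n (\<lambda>(i, j). B $$ (p i, j))"
    by (rule eq_matI) (auto simp: B_def p_less)
  then have "det (mat n n (\<lambda>(i, j). A $$ (p i, p j))) = signof p * (signof p * det A)"
    using det_permute_rows[OF B p] det_B by simp
  also have "\<dots> = det A"
    by (simp add: sign_def)
  finally show ?thesis .
qed

definition zigzag :: "nat \<Rightarrow> nat \<Rightarrow> nat" where
  "zigzag n k = (if k < n then if even k then k div 2 else n - 1 - k div 2 else k)"

lemma zigzag_cases:
  obtains (even) m where "k = 2 * m" "zigzag n k = (if k < n then m else k)"
        | (odd) m where "k = 2 * m + 1" "zigzag n k = (if k < n then n - 1 - m else k)"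
proof (cases "even k")
  case True
  then obtain m where "k = 2 * m" by blast
  then show ?thesis using even[of m] by (simp add: zigzag_def)
next
  case False
  then obtain m where "k = 2 * m + 1" using oddE by blast
  then show ?thesis using odd[of m] by (simp add: zigzag_def)
qed

lemma zigzag_less: "k < n \<Longrightarrow> zigzag n k < n"
  by (rule zigzag_cases[of k n]) auto

lemma zigzag_inj: "i < n \<Longrightarrow> j < n \<Longrightarrow> zigzag n i = zigzag n j \<Longrightarrow> i = j"
  by (rule zigzag_cases[of i n]; rule zigzag_cases[of j n]) auto

lemma zigzag_permutes: "zigzag n permutes {0..<n}"
proof (rule bij_imp_permutes)
  have inj: "inj_on (zigzag n) {0..<n}"
    by (rule inj_onI, rule zigzag_inj) auto
  have "zigzag n ` {0..<n} \<subseteq> {0..<n}"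
    using zigzag_less by auto
  then have "zigzag n ` {0..<n} = {0..<n}"
    by (rule endo_inj_surj[OF finite_atLeastLessThan _ inj])
  with inj show "bij_betw (zigzag n) {0..<n} {0..<n}"
    by (simp add: bij_betw_def)
qed (simp add: zigzag_def)

lemma zigzag_adjacent:
  assumes "i < n" "j < n"
    and "zigzag n j = n - 1 - zigzag n i \<or> (1 \<le> zigzag n i \<and> zigzag n j = n - zigzag n i)"
  shows "j = i \<or> j = Suc i \<or> i = Suc j"
  using assms by (cases rule: zigzag_cases[of i n]; cases rule: zigzag_cases[of j n]) (simp; arith)+

(* After relabelling by zigzag, G_l + s r Id has diagonal entries s r + xi_centre and products
   xi_weight of its off-diagonal pairs; (a, b, c) stand for the coordinates (mu : r : theta). *)
definition xi_centre :: "nat \<Rightarrow> 'a \<Rightarrow> 'a \<Rightarrow> nat \<Rightarrow> 'a::comm_ring_1" where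
  "xi_centre l a c i = (if i = l - 1 then if odd l then a else - of_nat (l div 2) * c else 0)"

definition xi_weight :: "nat \<Rightarrow> 'a \<Rightarrow> 'a \<Rightarrow> nat \<Rightarrow> 'a::comm_ring_1" where
  "xi_weight l a c k = (if even k then a\<^sup>2 else of_nat ((k div 2 + 1) * (l - 1 - k div 2)) * c\<^sup>2)"

definition xi_form :: "nat \<Rightarrow> 'a \<Rightarrow> 'a \<Rightarrow> 'a \<Rightarrow> 'a \<Rightarrow> 'a::comm_ring_1" where
  "xi_form l s a b c = continuant (\<lambda>i. xi_centre l a c i + s * b) (xi_weight l a c) l"

definition xi_r_poly :: "nat \<Rightarrow> 'a \<Rightarrow> 'a \<Rightarrow> 'a::comm_ring_1 poly" where
  "xi_r_poly l s a = continuant_poly (xi_centre l a 1) s (xi_weight l a 1) l"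

lemma (in comm_ring_hom) hom_xi_centre: "hom (xi_centre l a c i) = xi_centre l (hom a) (hom c) i"
  by (simp add: xi_centre_def hom_distribs)

lemma (in comm_ring_hom) hom_xi_weight: "hom (xi_weight l a c k) = xi_weight l (hom a) (hom c) k"
  by (simp add: xi_weight_def hom_distribs)

lemma (in comm_ring_hom) map_poly_xi_r_poly:
  "map_poly hom (xi_r_poly l s a) = xi_r_poly l (hom s) (hom a)"
  unfolding xi_r_poly_def map_poly_continuant_poly hom_xi_centre hom_xi_weight
  by simp

lemma poly_xi_r_poly: "poly (xi_r_poly l s a) x = xi_form l s a x 1"
  by (simp add: xi_r_poly_def xi_form_def poly_continuant_poly)

definition Xi_mat :: "nat \<Rightarrow> complex \<Rightarrow> complex poly poly mat" where
  "Xi_mat l s = Gmat l + [:0, [:s:]:] \<cdot>\<^sub>m 1\<^sub>m l"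

lemma Xi_mat_carrier: "Xi_mat l s \<in> carrier_mat l l"
  by (simp add: Xi_mat_def Gmat_def)

lemma Xi_mat_entry:
  "i < l \<Longrightarrow> j < l \<Longrightarrow> Xi_mat l s $$ (i, j) =
    (if j = l - 1 - i then [:[:0, 1:]:] else if 1 \<le> i \<and> j = l - i then [:[:- of_nat (l - i):]:] else 0)
    + (if i = j then [:0, [:s:]:] else 0)"
  by (simp add: Xi_mat_def Gmat_def)

lemma Xi_mat_zigzag_diag:
  assumes "i < l"
  shows "Xi_mat l s $$ (zigzag l i, zigzag l i) = [:xi_centre l [:0, 1:] 1 i, [:s:]:]"
proof (rule zigzag_cases[of i l])
  fix m assume i: "i = 2 * m" "zigzag l i = (if i < l then m else i)"
  then have \<sigma>: "zigzag l i = m"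
    using assms by simp
  show ?thesis
  proof (cases "l = 2 * m + 1")
    case True
    with i \<sigma> show ?thesis
      by (simp add: Xi_mat_entry xi_centre_def)
  next
    case False
    with i \<sigma> assms show ?thesis
      by (auto simp: Xi_mat_entry xi_centre_def)
  qed
next
  fix m assume i: "i = 2 * m + 1" "zigzag l i = (if i < l then l - 1 - m else i)"
  then have \<sigma>: "zigzag l i = l - 1 - m"
    using assms by simp
  show ?thesis
  proof (cases "l = 2 * m + 2")
    case True
    then have "l - (l - 1 - m) = l div 2"
      by simp
    with True i \<sigma> show ?thesis
      by (simp add: Xi_mat_entry xi_centre_def of_nat_poly)
  next
    case False
    with i \<sigma> assms show ?thesis
      by (auto simp: Xi_mat_entry xi_centre_def)
  qed
qed

lemma Xi_mat_zigzag_weight: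
  assumes "Suc k < l"
  shows "Xi_mat l s $$ (zigzag l k, zigzag l (Suc k)) * Xi_mat l s $$ (zigzag l (Suc k), zigzag l k)
    = [:xi_weight l [:0, 1:] 1 k:]"
proof (rule zigzag_cases[of k l])
  fix m assume k: "k = 2 * m"
  define d where "d = l - (2 * m + 2)"
  have l: "l = 2 * m + 2 + d"
    using assms k unfolding d_def by simp
  have "zigzag l k = m" "zigzag l (Suc k) = m + 1 + d"
    using k by (simp_all add: l zigzag_def)
  then show ?thesis
    using k by (simp add: l Xi_mat_entry xi_weight_def power2_eq_square)
next
  fix m assume k: "k = 2 * m + 1"
  define d where "d = l - (2 * m + 3)"
  have l: "l = 2 * m + 3 + d"
    using assms k unfolding d_def by simp
  have "zigzag l k = m + 2 + d" "zigzag l (Suc k) = Suc m"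
    using k by (simp_all add: l zigzag_def)
  then show ?thesis
    using k by (simp add: l Xi_mat_entry xi_weight_def of_nat_poly algebra_simps)
qed

lemma Xi_mat_zigzag_off:
  assumes "i < l" "j < l" "j \<noteq> i" "j \<noteq> Suc i" "i \<noteq> Suc j"
  shows "Xi_mat l s $$ (zigzag l i, zigzag l j) = 0"
proof -
  have "zigzag l j \<noteq> l - 1 - zigzag l i" "\<not> (1 \<le> zigzag l i \<and> zigzag l j = l - zigzag l i)"
    using zigzag_adjacent[OF assms(1,2)] assms(3-5) by blast+
  moreover have "zigzag l i \<noteq> zigzag l j"
    using zigzag_inj[OF assms(1,2)] assms(3) by auto
  ultimately show ?thesis
    using assms by (auto simp: Xi_mat_entry zigzag_less)
qed

lemma Xi_poly_eq_xi_r_poly: "Xi_poly l s = xi_r_poly l [:s:] [:0, 1:]"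
proof -
  let ?A = "Xi_mat l s" and ?\<sigma> = "zigzag l"
  have "Xi_poly l s = det (mat l l (\<lambda>(i, j). ?A $$ (?\<sigma> i, ?\<sigma> j)))"
    by (simp add: Xi_poly_def Xi_mat_def[symmetric]
        det_permute_rows_and_cols[OF Xi_mat_carrier zigzag_permutes])
  also have "mat l l (\<lambda>(i, j). ?A $$ (?\<sigma> i, ?\<sigma> j)) = tridiagonal_mat l
      (\<lambda>i. ?A $$ (?\<sigma> i, ?\<sigma> i)) (\<lambda>i. ?A $$ (?\<sigma> i, ?\<sigma> (Suc i))) (\<lambda>i. ?A $$ (?\<sigma> (Suc i), ?\<sigma> i))"
    by (rule eq_matI) (auto simp: tridiagonal_mat_def Xi_mat_zigzag_off)
  also have "det \<dots> = xi_r_poly l [:s:] [:0, 1:]"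
    unfolding det_tridiagonal_mat xi_r_poly_def continuant_poly_def
    by (rule continuant_cong) (simp_all add: Xi_mat_zigzag_diag Xi_mat_zigzag_weight)
  finally show ?thesis .
qed

lemma aff_eval_Xi_poly: "aff_eval (Xi_poly l s) m r = xi_form l s m r 1"
proof -
  have "map_poly (\<lambda>q. poly q m) (Xi_poly l s) = xi_r_poly l s m"
    unfolding Xi_poly_eq_xi_r_poly comm_ring_hom.map_poly_xi_r_poly[OF comm_ring_hom_poly]
    by simp
  then show ?thesis
    by (simp add: aff_eval_def poly_xi_r_poly)
qed

section \<open>Homogenisation\<close>

definition tdeg_le :: "complex poly poly \<Rightarrow> nat \<Rightarrow> bool" where
  "tdeg_le P n \<longleftrightarrow> (\<forall>i j. bcoeff P i j \<noteq> 0 \<longrightarrow> i + j \<le> n)"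

lemma tdeg_le_diff: "tdeg_le P n \<Longrightarrow> tdeg_le Q n \<Longrightarrow> tdeg_le (P - Q) n"
  unfolding tdeg_le_def bcoeff_def by (metis coeff_diff diff_zero)

lemma bcoeff_mult:
  "bcoeff (P * Q) i j = (\<Sum>a\<le>j. \<Sum>b\<le>i. bcoeff P b a * bcoeff Q (i - b) (j - a))"
  unfolding bcoeff_def coeff_mult coeff_sum by simp

lemma tdeg_le_mult:
  assumes "tdeg_le P n" "tdeg_le Q m"
  shows "tdeg_le (P * Q) (n + m)"
  unfolding tdeg_le_def
proof (intro allI impI)
  fix i j assume nz: "bcoeff (P * Q) i j \<noteq> 0"
  show "i + j \<le> n + m"
  proof (rule ccontr)
    assume big: "\<not> i + j \<le> n + m"
    have "bcoeff P b a * bcoeff Q (i - b) (j - a) = 0" if "a \<le> j" "b \<le> i" for a b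
    proof (rule ccontr)
      assume "bcoeff P b a * bcoeff Q (i - b) (j - a) \<noteq> 0"
      then have "b + a \<le> n" "(i - b) + (j - a) \<le> m"
        using assms unfolding tdeg_le_def by auto
      with that big show False by linarith
    qed
    then have "bcoeff (P * Q) i j = 0"
      unfolding bcoeff_mult by (intro sum.neutral ballI) auto
    with nz show False by contradiction
  qed
qed

lemma tdeg_le_linear: "degree p \<le> 1 \<Longrightarrow> degree q = 0 \<Longrightarrow> tdeg_le [:p, q:] 1"
  unfolding tdeg_le_def bcoeff_def
  by (auto simp: coeff_pCons split: nat.splits dest!: le_degree)

lemma tdeg_le_const: "degree p \<le> n \<Longrightarrow> tdeg_le [:p:] n"
  unfolding tdeg_le_def bcoeff_def
  by (auto simp: coeff_pCons split: nat.splits dest!: le_degree)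

lemma tdeg_le_continuant_poly:
  assumes "\<And>i. degree (\<delta> i) \<le> 1" "degree s = 0" "\<And>k. degree (w k) \<le> 2"
  shows "tdeg_le (continuant_poly \<delta> s w n) n"
  unfolding continuant_poly_def
proof (induction n rule: induct_nat_012)
  case 0
  show ?case by (simp add: tdeg_le_def bcoeff_def coeff_1)
next
  case 1
  show ?case using tdeg_le_linear assms by simp
next
  case (ge2 n)
  have "tdeg_le ([:\<delta> (Suc n), s:] * continuant (\<lambda>i. [:\<delta> i, s:]) (\<lambda>k. [:w k:]) (Suc n)) (1 + Suc n)"
    using assms ge2 by (intro tdeg_le_mult tdeg_le_linear)
  moreover have "tdeg_le ([:w n:] * continuant (\<lambda>i. [:\<delta> i, s:]) (\<lambda>k. [:w k:]) n) (2 + n)"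
    using assms ge2 by (intro tdeg_le_mult tdeg_le_const)
  ultimately show ?case
    by (simp add: tdeg_le_diff)
qed

lemma tdeg_eqI:
  assumes "tdeg_le P n" "bcoeff P i j \<noteq> 0" "i + j = n"
  shows "tdeg P = n"
  unfolding tdeg_def
proof (rule Max_eqI)
  show "finite {i + j |i j. bcoeff P i j \<noteq> 0}"
    by (rule finite_subset[of _ "{..n}"]) (use assms(1) in \<open>auto simp: tdeg_le_def\<close>)
qed (use assms in \<open>auto simp: tdeg_le_def\<close>)

lemma tdeg_le_Xi_poly: "tdeg_le (Xi_poly l s) l"
  unfolding Xi_poly_eq_xi_r_poly xi_r_poly_def
  by (rule tdeg_le_continuant_poly)
    (auto simp: xi_centre_def xi_weight_def simp del: of_nat_mult of_nat_add
      intro: order.trans[OF degree_power_le])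

lemma tdeg_Xi_poly: "s \<noteq> 0 \<Longrightarrow> tdeg (Xi_poly l s) = l"
  using continuant_poly_degree_coeff[of "xi_centre l [:0, 1:] 1" "[:s:]" "xi_weight l [:0, 1:] 1" l]
  by (intro tdeg_eqI[OF tdeg_le_Xi_poly, of _ _ 0 l])
    (simp_all add: Xi_poly_eq_xi_r_poly xi_r_poly_def bcoeff_def poly_const_pow)

lemma poly_eq_sum_le:
  fixes p :: "'a::comm_semiring_1 poly"
  shows "degree p \<le> n \<Longrightarrow> poly p x = (\<Sum>i\<le>n. coeff p i * x ^ i)"
proof -
  assume "degree p \<le> n"
  then have "poly p x = poly (\<Sum>i\<le>n. monom (coeff p i) i) x"
    by (simp add: poly_as_sum_of_monoms')
  also have "\<dots> = (\<Sum>i\<le>n. coeff p i * x ^ i)"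
    by (simp add: poly_sum poly_monom)
  finally show ?thesis .
qed

lemma aff_eval_eq_sum:
  "aff_eval P m r = (\<Sum>j\<le>degree P. \<Sum>i\<le>degree (coeff P j). bcoeff P i j * m ^ i * r ^ j)"
proof -
  have "aff_eval P m r = (\<Sum>j\<le>degree P. coeff (map_poly (\<lambda>q. poly q m) P) j * r ^ j)"
    unfolding aff_eval_def by (rule poly_eq_sum_le) (rule map_poly_degree_leq)
  also have "\<dots> = (\<Sum>j\<le>degree P. \<Sum>i\<le>degree (coeff P j). bcoeff P i j * m ^ i * r ^ j)"
    by (simp add: coeff_map_poly poly_altdef bcoeff_def sum_distrib_right)
  finally show ?thesis .
qed

lemma homog_eq_aff_eval:
  assumes "tdeg_le P (tdeg P)" "c \<noteq> 0"
  shows "homog P a b c = c ^ tdeg P * aff_eval P (a / c) (b / c)"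
proof -
  have monomial: "bcoeff P i j * a ^ i * b ^ j * c ^ (tdeg P - i - j)
      = c ^ tdeg P * (bcoeff P i j * (a / c) ^ i * (b / c) ^ j)" for i j
  proof (cases "bcoeff P i j = 0")
    case False
    then have "tdeg P = (tdeg P - i - j) + i + j"
      using assms(1) unfolding tdeg_le_def by fastforce
    then have "c ^ tdeg P = c ^ (tdeg P - i - j) * c ^ i * c ^ j"
      by (metis power_add)
    then show ?thesis
      using assms(2) by (simp add: power_divide)
  qed simp
  show ?thesis
    unfolding homog_def aff_eval_eq_sum monomial by (simp add: sum_distrib_left)
qed

lemma xi_form_homogeneous:
  fixes a b c s :: "'a::field"
  assumes "c \<noteq> 0"
  shows "xi_form l s a b c = c ^ l * xi_form l s (a / c) (b / c) 1"
proof -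
  have "xi_form l s a b c = continuant (\<lambda>i. c * (xi_centre l (a / c) 1 i + s * (b / c)))
      (\<lambda>k. c\<^sup>2 * xi_weight l (a / c) 1 k) l"
    unfolding xi_form_def using assms
    by (intro continuant_cong) (simp_all add: xi_centre_def xi_weight_def field_simps)
  then show ?thesis
    by (simp add: continuant_scale xi_form_def)
qed

lemma isCont_homog: "isCont (\<lambda>c. homog P a b c) c0"
  unfolding homog_def by (intro continuous_intros)

lemma isCont_xi_weight: "isCont (\<lambda>c. xi_weight l a c k) (c0::'a::real_normed_field)"
  by (cases "even k") (simp_all add: xi_weight_def)

lemma isCont_xi_form:
  fixes a b s :: "'a::{real_normed_field}"
  shows "isCont (\<lambda>c. xi_form l s a b c) c0"
proof -
  have "isCont (\<lambda>c. xi_centre l a c i) c0" for i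
    by (cases "i = l - 1"; cases "odd l") (simp_all add: xi_centre_def)
  then show ?thesis
    unfolding xi_form_def by (auto intro: continuous_continuant isCont_xi_weight)
qed

lemma isCont_eq_at_point:
  fixes f g :: "complex \<Rightarrow> complex"
  assumes "isCont f x" "isCont g x" "\<And>y. y \<noteq> x \<Longrightarrow> f y = g y"
  shows "f x = g x"
proof -
  have "g \<midarrow>x\<rightarrow> f x"
    using assms(1,3) LIM_equal[of x f g] by (simp add: isCont_def)
  with assms(2) show ?thesis
    unfolding isCont_def by (rule LIM_unique[rotated])
qed

lemma homog_Xi_poly:
  assumes "s \<noteq> 0"
  shows "homog (Xi_poly l s) a b c = xi_form l s a b c"
proof -
  have off_zero: "homog (Xi_poly l s) a b c' = xi_form l s a b c'" if "c' \<noteq> 0" for c'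
    using homog_eq_aff_eval[of "Xi_poly l s" c' a b] that
    by (simp add: tdeg_Xi_poly[OF assms] tdeg_le_Xi_poly aff_eval_Xi_poly xi_form_homogeneous[OF that])
  show ?thesis
  proof (cases "c = 0")
    case True
    show ?thesis
      using isCont_eq_at_point[OF isCont_homog isCont_xi_form off_zero] True by simp
  qed (rule off_zero)
qed

section \<open>Real affine points\<close>

definition simple_roots_bounded :: "real poly \<Rightarrow> real \<Rightarrow> bool" where
  "simple_roots_bounded p c \<longleftrightarrow> (\<forall>x. poly p x = 0 \<longrightarrow> poly (pderiv p) x \<noteq> 0 \<and> x\<^sup>2 \<le> c)"

lemma rsquarefree_if_simple_roots_bounded: "simple_roots_bounded p c \<Longrightarrow> rsquarefree p"
  by (auto simp: simple_roots_bounded_def rsquarefree_roots)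

lemma simple_roots_bounded_mult_quadratic:
  assumes "simple_roots_bounded q c0" "0 \<le> c0" "c0 < c"
  shows "simple_roots_bounded ([:- c, 0, 1:] * q) c"
  unfolding simple_roots_bounded_def
proof (intro allI impI)
  fix x assume "poly ([:- c, 0, 1:] * q) x = 0"
  then have root: "(x\<^sup>2 - c) * poly q x = 0"
    by (simp add: algebra_simps power2_eq_square)
  have deriv: "poly (pderiv ([:- c, 0, 1:] * q)) x = 2 * x * poly q x + (x\<^sup>2 - c) * poly (pderiv q) x"
    by (simp add: pderiv_mult pderiv_pCons pderiv_diff pderiv_smult algebra_simps power2_eq_square)
  show "poly (pderiv ([:- c, 0, 1:] * q)) x \<noteq> 0 \<and> x\<^sup>2 \<le> c"
  proof (cases "poly q x = 0")
    case True
    with assms show ?thesis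
      unfolding deriv simple_roots_bounded_def by fastforce
  next
    case False
    with root assms(2,3) show ?thesis
      unfolding deriv by auto
  qed
qed

lemma rsquarefree_mult_linear:
  assumes "s \<noteq> 0" "simple_roots_bounded q c0" "c0 < (t / s)\<^sup>2"
  shows "rsquarefree ([:- t, s:] * q)"
  unfolding rsquarefree_roots
proof (intro allI notI)
  fix x
  assume "poly ([:- t, s:] * q) x = 0 \<and> poly (pderiv ([:- t, s:] * q)) x = 0"
  then have root: "(s * x - t) * poly q x = 0" and deriv: "s * poly q x + (s * x - t) * poly (pderiv q) x = 0"
    by (simp_all add: pderiv_mult pderiv_pCons pderiv_diff pderiv_smult algebra_simps)
  show False
  proof (cases "poly q x = 0")
    case True
    with assms(2) have "poly (pderiv q) x \<noteq> 0" "x\<^sup>2 \<le> c0"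
      by (auto simp: simple_roots_bounded_def)
    with assms(1,3) have "s * x - t \<noteq> 0"
      by (auto simp: field_simps)
    with True deriv \<open>poly (pderiv q) x \<noteq> 0\<close> show False
      by simp
  next
    case False
    with root deriv assms(1) show False
      by simp
  qed
qed

(* For mu = 0 the even weights vanish and p_(2j+3) = (x^2 - (j+1) (l-j-1)) p_(2j+1). *)
lemma simple_roots_bounded_xi_zero_odd:
  fixes s :: real
  assumes "s\<^sup>2 = 1" "2 * j + 1 \<le> l"
  shows "simple_roots_bounded (continuant_poly (\<lambda>_. 0) s (xi_weight l 0 1) (2 * j + 1)) (real (j * (l - j)))"
  using assms(2)
proof (induction j)
  case 0
  show ?case
    using assms(1) by (auto simp: simple_roots_bounded_def continuant_poly_def pderiv_linear)
next
  case (Suc j)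
  let ?q = "\<lambda>j. continuant_poly (\<lambda>_. 0) s (xi_weight l 0 1) (2 * j + 1)"
  have step: "?q (Suc j) = [:- real (Suc j * (l - Suc j)), 0, 1:] * ?q j"
    by (subst continuant_poly_odd_step) (simp_all add: assms(1) xi_weight_def)
  define d where "d = l - (2 * j + 3)"
  have "l = 2 * j + 3 + d"
    using Suc.prems by (simp add: d_def)
  then have "j * (l - j) < Suc j * (l - Suc j)"
    by (simp add: algebra_simps)
  then have "real (j * (l - j)) < real (Suc j * (l - Suc j))"
    by (simp only: of_nat_less_iff)
  with Suc show ?case
    unfolding step by (intro simple_roots_bounded_mult_quadratic) simp_all
qed

lemma rsquarefree_xi_r_poly_nonzero:
  fixes s mu :: real
  assumes "s \<noteq> 0" "mu \<noteq> 0" "l \<ge> 1"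
  shows "rsquarefree (xi_r_poly l s mu)"
proof -
  obtain k where l: "l = Suc k"
    using assms(3) by (cases l) auto
  have "0 < xi_weight l mu 1 j" if "j < k" for j
  proof (cases "even j")
    case True
    with assms(2) show ?thesis
      by (simp add: xi_weight_def)
  next
    case False
    then have weight: "xi_weight l mu 1 j = real ((j div 2 + 1) * (l - 1 - j div 2))"
      by (simp add: xi_weight_def)
    have "0 < (j div 2 + 1) * (l - 1 - j div 2)"
      using that by (simp add: l)
    then show ?thesis
      unfolding weight by (simp only: of_nat_0_less_iff)
  qed
  then show ?thesis
    unfolding xi_r_poly_def l using assms(1) by (intro rsquarefree_continuant_poly) auto
qed

lemma xi_r_poly_zero_odd:
  "xi_r_poly (2 * j + 1) s 0 = continuant_poly (\<lambda>_. 0) s (xi_weight (2 * j + 1) 0 1) (2 * j + 1)"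
  unfolding xi_r_poly_def continuant_poly_def
  by (intro continuant_cong) (auto simp: xi_centre_def)

lemma xi_r_poly_zero_even:
  fixes s :: real
  shows "xi_r_poly (2 * j + 2) s 0
    = [:- real (Suc j), s:] * continuant_poly (\<lambda>_. 0) s (xi_weight (2 * j + 2) 0 1) (2 * j + 1)"
proof -
  let ?l = "2 * j + 2"
  have "continuant_poly (xi_centre ?l 0 1) s (xi_weight ?l 0 1) (2 * j + 1)
      = continuant_poly (\<lambda>_. 0) s (xi_weight ?l 0 1) (2 * j + 1)"
    unfolding continuant_poly_def by (intro continuant_cong) (auto simp: xi_centre_def)
  moreover have "?l = Suc (Suc (2 * j))" "2 * j + 1 = Suc (2 * j)"
    by simp_all
  ultimately show ?thesis
    unfolding xi_r_poly_def
    by (simp add: continuant_poly_def xi_centre_def xi_weight_def del: continuant.simps(2))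
qed

lemma rsquarefree_xi_r_poly_zero:
  fixes s :: real
  assumes "s\<^sup>2 = 1" "l \<ge> 1"
  shows "rsquarefree (xi_r_poly l s 0)"
proof (cases "odd l")
  case True
  then obtain j where l: "l = 2 * j + 1"
    by (auto elim: oddE)
  show ?thesis
    unfolding l xi_r_poly_zero_odd
    by (rule rsquarefree_if_simple_roots_bounded simple_roots_bounded_xi_zero_odd assms(1) order_refl)+
next
  case False
  then obtain k where "l = 2 * k"
    by (auto elim: evenE)
  with assms(2) have "l = 2 * (k - 1) + 2"
    by simp
  then obtain j where l: "l = 2 * j + 2"
    by blast
  have "j * (l - j) < Suc j * Suc j"
    by (simp add: l)
  then have "real (j * (l - j)) < (real (Suc j))\<^sup>2"
    unfolding power2_eq_square by (simp only: of_nat_less_iff of_nat_mult[symmetric])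
  moreover have "(real (Suc j) / s)\<^sup>2 = (real (Suc j))\<^sup>2"
    using assms(1) by (simp add: power_divide)
  ultimately have "real (j * (l - j)) < (real (Suc j) / s)\<^sup>2"
    by simp
  moreover have "s \<noteq> 0"
    using assms(1) by auto
  moreover have "simple_roots_bounded (continuant_poly (\<lambda>_. 0) s (xi_weight l 0 1) (2 * j + 1))
      (real (j * (l - j)))"
    using assms(1) by (rule simple_roots_bounded_xi_zero_odd) (simp add: l)
  ultimately have "rsquarefree ([:- real (Suc j), s:] * continuant_poly (\<lambda>_. 0) s (xi_weight l 0 1) (2 * j + 1))"
    by (intro rsquarefree_mult_linear)
  then show ?thesis
    unfolding l xi_r_poly_zero_even .
qed

lemma rsquarefree_xi_r_poly:
  fixes s mu :: real
  assumes "s\<^sup>2 = 1" "l \<ge> 1"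
  shows "rsquarefree (xi_r_poly l s mu)"
proof (cases "mu = 0")
  case True
  with rsquarefree_xi_r_poly_zero[OF assms] show ?thesis
    by simp
next
  case False
  moreover have "s \<noteq> 0"
    using assms(1) by auto
  ultimately show ?thesis
    using rsquarefree_xi_r_poly_nonzero assms(2) by blast
qed

lemma pderiv_map_poly_of_real:
  "pderiv (map_poly of_real p) = map_poly (of_real :: real \<Rightarrow> complex) (pderiv p)"
  by (intro poly_eqI) (simp add: coeff_pderiv coeff_map_poly)

lemma poly_map_poly_of_real:
  "poly (map_poly of_real p) (of_real x) = (of_real (poly p x) :: complex)"
  by (induction p) (simp_all add: map_poly_pCons)

lemma aff_eval_Xi_poly_of_real:
  "aff_eval (Xi_poly l (of_real s)) (of_real mu) y = poly (map_poly of_real (xi_r_poly l s mu)) y"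
  by (simp add: aff_eval_Xi_poly of_real_hom.map_poly_xi_r_poly poly_xi_r_poly)

lemma Xi_poly_affine_deriv_r_nonzero:
  fixes s mu r :: real
  assumes "s\<^sup>2 = 1" "l \<ge> 1" "aff_eval (Xi_poly l (of_real s)) (of_real mu) (of_real r) = 0"
  shows "\<not> ((\<lambda>y. aff_eval (Xi_poly l (of_real s)) (of_real mu) y) has_field_derivative 0) (at (of_real r))"
proof
  let ?p = "xi_r_poly l s mu"
  assume "((\<lambda>y. aff_eval (Xi_poly l (of_real s)) (of_real mu) y) has_field_derivative 0) (at (of_real r))"
  moreover have "((\<lambda>y. aff_eval (Xi_poly l (of_real s)) (of_real mu) y) has_field_derivative
      of_real (poly (pderiv ?p) r)) (at (of_real r))"
  proof -
    have "poly (pderiv (map_poly of_real ?p)) (of_real r) = (of_real (poly (pderiv ?p) r) :: complex)"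
      by (simp add: pderiv_map_poly_of_real poly_map_poly_of_real)
    then show ?thesis
      unfolding aff_eval_Xi_poly_of_real by (metis poly_DERIV)
  qed
  ultimately have "poly (pderiv ?p) r = 0"
    using DERIV_unique by fastforce
  moreover have "poly ?p r = 0"
    using assms(3) by (simp add: aff_eval_Xi_poly_of_real poly_map_poly_of_real)
  ultimately show False
    using rsquarefree_xi_r_poly[OF assms(1,2)] unfolding rsquarefree_roots by blast
qed

(* Off theta = 0, a singular point would be a multiple real root of the dehomogenised polynomial in r. *)
lemma real_singular_point_at_infinity:
  fixes s a b c :: real
  assumes "s\<^sup>2 = 1" "l \<ge> 1"
    and "proj_singular (homog (Xi_poly l (of_real s))) (of_real a) (of_real b) (of_real c)"
  shows "c = 0"
proof (rule ccontr)
  assume "c \<noteq> 0"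
  let ?H = "\<lambda>y. homog (Xi_poly l (of_real s)) (of_real a) y (of_real c)"
  let ?F = "\<lambda>z. aff_eval (Xi_poly l (of_real s)) (of_real (a / c)) z"
  have s: "complex_of_real s \<noteq> 0"
    using assms(1) by auto
  have F: "?F = (\<lambda>z. ?H (of_real c * z) / of_real c ^ l)"
    using \<open>c \<noteq> 0\<close>
    by (simp add: fun_eq_iff homog_Xi_poly[OF s] xi_form_homogeneous[of "of_real c"] aff_eval_Xi_poly)
  have "(?H has_field_derivative 0) (at (of_real c * of_real (b / c)))"
    using assms(3) \<open>c \<noteq> 0\<close> by (simp add: proj_singular_def)
  then have "((\<lambda>z. ?H (of_real c * z)) has_field_derivative 0 * of_real c) (at (of_real (b / c)))"
    by (rule DERIV_chain2) (rule DERIV_cmult_Id)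
  then have "((\<lambda>z. ?H (of_real c * z) / of_real c ^ l) has_field_derivative 0 * of_real c / of_real c ^ l)
      (at (of_real (b / c)))"
    by (rule DERIV_cdivide)
  then have "(?F has_field_derivative 0) (at (of_real (b / c)))"
    unfolding F by simp
  moreover have "?F (of_real (b / c)) = 0"
    using assms(3) \<open>c \<noteq> 0\<close> unfolding F by (simp add: proj_singular_def)
  ultimately show False
    using Xi_poly_affine_deriv_r_nonzero[OF assms(1,2)] by blast
qed

section \<open>Points at infinity\<close>

lemma xi_form_split:
  assumes "l \<ge> 1"
  shows "xi_form l s a b c = continuant (\<lambda>_. s * b) (xi_weight l a c) l
    + (if odd l then a else - of_nat (l div 2) * c) * continuant (\<lambda>_. s * b) (xi_weight l a c) (l - 1)"
proof -
  obtain n where l: "l = Suc n"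
    using assms by (cases l) auto
  have "continuant (\<lambda>i. xi_centre l a c i + s * b) (xi_weight l a c) (Suc n)
      = continuant (\<lambda>_. s * b) (xi_weight l a c) (Suc n)
        + (if odd l then a else - of_nat (l div 2) * c) * continuant (\<lambda>_. s * b) (xi_weight l a c) n"
    by (rule continuant_update_last) (auto simp: xi_centre_def l)
  then show ?thesis
    by (simp add: xi_form_def l)
qed

lemma xi_form_at_infinity:
  assumes "l \<ge> 1"
  shows "xi_form l s a b 0 = (if odd l then s * b + a else 1) * ((s * b)\<^sup>2 - a\<^sup>2) ^ (l div 2)"
proof -
  have "xi_weight l a 0 = (\<lambda>k. if even k then a\<^sup>2 else 0)"
    by (simp add: fun_eq_iff xi_weight_def)
  moreover have "(l - 1) div 2 = l div 2" if "odd l"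
    using that by (auto elim: oddE)
  ultimately show ?thesis
    using assms by (simp add: xi_form_split continuant_const_even_weights algebra_simps)
qed

lemma DERIV_mult_self_at_0:
  fixes g :: "'a::real_normed_field \<Rightarrow> 'a"
  assumes "isCont g 0"
  shows "((\<lambda>z. z * g z) has_field_derivative g 0) (at 0)"
proof -
  have "(g \<longlongrightarrow> g 0) (at 0)"
    using assms by (simp add: isCont_def)
  moreover have "\<forall>\<^sub>F z in at 0. g z = (z * g z - 0 * g 0) / (z - 0)"
    by (auto simp: eventually_at_filter)
  ultimately show ?thesis
    unfolding has_field_derivative_iff by (rule Lim_transform_eventually)
qed

lemma DERIV_at_0_antisymmetric_part:
  fixes f g :: "'a::real_normed_field \<Rightarrow> 'a"
  assumes "(f has_field_derivative D) (at 0)" "isCont g 0" "\<And>z. f z - f (- z) = z * g z"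
  shows "2 * D = g 0"
proof -
  have "(f has_field_derivative D) (at (- 0))"
    using assms(1) by simp
  then have "((\<lambda>z. f (- z)) has_field_derivative D * - 1) (at 0)"
    by (rule DERIV_chain2) (rule DERIV_minus[OF DERIV_ident])
  with assms(1) have "((\<lambda>z. f z - f (- z)) has_field_derivative 2 * D) (at 0)"
    using DERIV_diff by fastforce
  then have "((\<lambda>z. z * g z) has_field_derivative 2 * D) (at 0)"
    by (simp add: assms(3))
  then show ?thesis
    using DERIV_mult_self_at_0[OF assms(2)] by (rule DERIV_unique)
qed

(* The weights depend on theta only through theta^2, so only the central entry contributes to
   the odd part of the form in theta. *)
lemma xi_form_deriv_c_at_infinity:
  fixes s a b :: "'a::real_normed_field"
  assumes "l \<ge> 1" "((\<lambda>c. xi_form l s a b c) has_field_derivative D) (at 0)"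
  shows "D = (if odd l then 0 else - of_nat (l div 2) * (s * b) * ((s * b)\<^sup>2 - a\<^sup>2) ^ (l div 2 - 1))"
proof -
  let ?C = "\<lambda>c. continuant (\<lambda>_. s * b) (xi_weight l a c) (l - 1)"
  define g where "g c = (if odd l then 0 else - 2 * of_nat (l div 2) * ?C c)" for c
  have "xi_weight l a (- c) = xi_weight l a c" for c
    by (simp add: fun_eq_iff xi_weight_def)
  then have antisym: "xi_form l s a b c - xi_form l s a b (- c) = c * g c" for c
    by (simp add: xi_form_split[OF assms(1)] g_def algebra_simps)
  have "isCont g 0"
    unfolding g_def by (cases "odd l") (auto intro!: continuous_intros continuous_continuant isCont_xi_weight)
  then have "2 * D = g 0"
    using antisym by (rule DERIV_at_0_antisymmetric_part[OF assms(2)])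
  moreover have "?C 0 = s * b * ((s * b)\<^sup>2 - a\<^sup>2) ^ (l div 2 - 1)" if "even l"
  proof -
    have "xi_weight l a 0 = (\<lambda>k. if even k then a\<^sup>2 else 0)"
      by (simp add: fun_eq_iff xi_weight_def)
    moreover have "odd (l - 1)" "(l - 1) div 2 = l div 2 - 1"
      using that assms(1) by (auto elim!: evenE)
    ultimately show ?thesis
      by (simp add: continuant_const_even_weights)
  qed
  ultimately show ?thesis
    by (simp add: g_def split: if_splits)
qed

lemma DERIV_mult_power:
  assumes "(g has_field_derivative g') (at x)" "(u has_field_derivative u') (at x)"
  shows "((\<lambda>x. g x * u x ^ m) has_field_derivative g' * u x ^ m + g x * (of_nat m * u' * u x ^ (m - 1))) (at x)"
  using DERIV_mult[OF assms(1) DERIV_power[OF assms(2)]] by (simp add: algebra_simps)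

lemma ex_homog_field_derivative_c: "\<exists>D. ((\<lambda>z. homog P a b z) has_field_derivative D) (at c)"
  unfolding homog_def
  by (rule exI, (rule DERIV_sum DERIV_mult DERIV_power DERIV_ident DERIV_const)+)

lemma homog_Xi_poly_at_infinity:
  fixes s a b :: complex
  assumes "s \<noteq> 0" "l \<ge> 1"
  defines "g \<equiv> if odd l then s * b + a else 1" and "u \<equiv> (s * b)\<^sup>2 - a\<^sup>2" and "m \<equiv> l div 2"
  shows "homog (Xi_poly l s) a b 0 = g * u ^ m"
    and "((\<lambda>x. homog (Xi_poly l s) x b 0) has_field_derivative
      (if odd l then 1 else 0) * u ^ m + g * (of_nat m * (- 2 * a) * u ^ (m - 1))) (at a)"
    and "((\<lambda>y. homog (Xi_poly l s) a y 0) has_field_derivative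
      (if odd l then s else 0) * u ^ m + g * (of_nat m * (2 * s * (s * b)) * u ^ (m - 1))) (at b)"
    and "((\<lambda>z. homog (Xi_poly l s) a b z) has_field_derivative
      (if odd l then 0 else - of_nat m * (s * b) * u ^ (m - 1))) (at 0)"
proof -
  have H: "homog (Xi_poly l s) x y 0 = (if odd l then s * y + x else 1) * ((s * y)\<^sup>2 - x\<^sup>2) ^ m" for x y
    using assms by (simp add: homog_Xi_poly xi_form_at_infinity)
  then show "homog (Xi_poly l s) a b 0 = g * u ^ m"
    by (simp add: g_def u_def)
  show "((\<lambda>x. homog (Xi_poly l s) x b 0) has_field_derivative
      (if odd l then 1 else 0) * u ^ m + g * (of_nat m * (- 2 * a) * u ^ (m - 1))) (at a)"
    unfolding H g_def u_def by (rule DERIV_mult_power) (auto intro!: derivative_eq_intros)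
  show "((\<lambda>y. homog (Xi_poly l s) a y 0) has_field_derivative
      (if odd l then s else 0) * u ^ m + g * (of_nat m * (2 * s * (s * b)) * u ^ (m - 1))) (at b)"
    unfolding H g_def u_def
    by (rule DERIV_mult_power) (auto intro!: derivative_eq_intros simp: power2_eq_square)
  obtain D where D: "((\<lambda>z. homog (Xi_poly l s) a b z) has_field_derivative D) (at 0)"
    using ex_homog_field_derivative_c by blast
  moreover have "D = (if odd l then 0 else - of_nat m * (s * b) * u ^ (m - 1))"
    using D assms(2) xi_form_deriv_c_at_infinity[of l s a b D]
    by (simp add: homog_Xi_poly[OF assms(1)] u_def m_def)
  ultimately show "((\<lambda>z. homog (Xi_poly l s) a b z) has_field_derivative
      (if odd l then 0 else - of_nat m * (s * b) * u ^ (m - 1))) (at 0)"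
    by simp
qed

lemma proj_singular_Xi_poly_at_infinity_imp:
  fixes s a b :: complex
  assumes "s\<^sup>2 = 1" "l \<ge> 3" and sing: "proj_singular (homog (Xi_poly l s)) a b 0"
  shows "a \<noteq> 0 \<and> (s * b)\<^sup>2 = a\<^sup>2 \<and> (l = 3 \<longrightarrow> s * b + a = 0)"
proof -
  let ?g = "if odd l then s * b + a else 1" and ?u = "(s * b)\<^sup>2 - a\<^sup>2" and ?m = "l div 2"
  have s: "s \<noteq> 0"
    using assms(1) by auto
  have "l \<ge> 1"
    using assms(2) by simp
  note at_infinity = homog_Xi_poly_at_infinity[OF s this, where a = a and b = b]
  have "?g * ?u ^ ?m = 0"
    using sing at_infinity(1) assms(2) by (simp add: proj_singular_def)
  moreover have "?u = 0" if "?g = 0"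
  proof -
    have "a = - (s * b)"
      using that by (auto split: if_splits simp: eq_neg_iff_add_eq_0 add.commute)
    then show ?thesis
      by simp
  qed
  ultimately have u: "?u = 0"
    by auto
  then have a: "a \<noteq> 0"
    using sing s by (auto simp: proj_singular_def)
  have "?g = 0" if "l = 3"
  proof -
    have "((\<lambda>x. homog (Xi_poly l s) x b 0) has_field_derivative 0) (at a)"
      using sing by (simp add: proj_singular_def)
    from DERIV_unique[OF at_infinity(2) this] have "?g * (- 2 * a) = 0"
      using u that by simp
    with a show ?thesis
      by simp
  qed
  with u a show ?thesis
    by auto
qed

lemma proj_singular_Xi_poly_at_infinity_if:
  fixes s a b :: complex
  assumes "s \<noteq> 0" "l \<ge> 3" and rhs: "a \<noteq> 0" "(s * b)\<^sup>2 = a\<^sup>2" "l = 3 \<Longrightarrow> s * b + a = 0"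
  shows "proj_singular (homog (Xi_poly l s)) a b 0"
proof -
  let ?g = "if odd l then s * b + a else 1" and ?u = "(s * b)\<^sup>2 - a\<^sup>2" and ?m = "l div 2"
  have "l \<ge> 1"
    using assms(2) by simp
  note at_infinity = homog_Xi_poly_at_infinity[OF assms(1) this, where a = a and b = b]
  have u: "?u = 0"
    using rhs(2) by simp
  show ?thesis
  proof (cases "l = 3")
    case True
    with rhs have "?g = 0"
      by simp
    with True u rhs at_infinity show ?thesis
      by (simp add: proj_singular_def)
  next
    case False
    with assms(2) have "?u ^ ?m = 0" "?u ^ (?m - 1) = 0"
      using u by simp_all
    with rhs at_infinity[unfolded this] assms(2) show ?thesis
      by (simp add: proj_singular_def cong: if_cong)
  qed
qed

lemma proj_singular_Xi_poly_at_infinity: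
  fixes s a b :: complex
  assumes "s\<^sup>2 = 1" "l \<ge> 3"
  shows "proj_singular (homog (Xi_poly l s)) a b 0 \<longleftrightarrow>
    a \<noteq> 0 \<and> (s * b)\<^sup>2 = a\<^sup>2 \<and> (l = 3 \<longrightarrow> s * b + a = 0)"
proof -
  have "s \<noteq> 0"
    using assms(1) by auto
  then show ?thesis
    using proj_singular_Xi_poly_at_infinity_imp[OF assms] proj_singular_Xi_poly_at_infinity_if[of s l a b]
      assms(2) by blast
qed

lemma real_proj_singular_Xi_poly_iff:
  fixes s a b c :: real
  assumes "s\<^sup>2 = 1" "l \<ge> 3"
  shows "real_proj_singular (Xi_poly l (of_real s)) a b c \<longleftrightarrow>
    c = 0 \<and> a \<noteq> 0 \<and> (s * b)\<^sup>2 = a\<^sup>2 \<and> (l = 3 \<longrightarrow> s * b + a = 0)"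
proof -
  have s: "(complex_of_real s)\<^sup>2 = 1"
    using assms(1) by (metis of_real_1 of_real_power)
  have "real_proj_singular (Xi_poly l (of_real s)) a b c \<longleftrightarrow>
      c = 0 \<and> proj_singular (homog (Xi_poly l (of_real s))) (of_real a) (of_real b) 0"
    using real_singular_point_at_infinity[OF assms(1), of l a b c] assms(2)
    unfolding real_proj_singular_def by (cases "c = 0") auto
  also have "\<dots> \<longleftrightarrow> c = 0 \<and> of_real a \<noteq> (0::complex) \<and> of_real ((s * b)\<^sup>2) = (of_real (a\<^sup>2) :: complex)
      \<and> (l = 3 \<longrightarrow> of_real (s * b + a) = (0::complex))"
    using proj_singular_Xi_poly_at_infinity[OF s assms(2)] by simp
  also have "\<dots> \<longleftrightarrow> c = 0 \<and> a \<noteq> 0 \<and> (s * b)\<^sup>2 = a\<^sup>2 \<and> (l = 3 \<longrightarrow> s * b + a = 0)"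
    by (simp only: of_real_eq_iff of_real_eq_0_iff)
  finally show ?thesis .
qed

lemma not_proj_singular_Xi_poly_1:
  assumes "s \<noteq> 0"
  shows "\<not> proj_singular (homog (Xi_poly 1 s)) a b c"
proof
  have H: "homog (Xi_poly 1 s) x y z = x + s * y" for x y z
    by (simp add: homog_Xi_poly[OF assms] xi_form_def xi_centre_def)
  assume "proj_singular (homog (Xi_poly 1 s)) a b c"
  then have "((\<lambda>x. x + s * b) has_field_derivative 0) (at a)"
    unfolding proj_singular_def H by blast
  moreover have "((\<lambda>x. x + s * b) has_field_derivative 1) (at a)"
    by (auto intro!: derivative_eq_intros)
  ultimately show False
    using DERIV_unique by fastforce
qed

lemma not_proj_singular_Xi_poly_2:
  assumes "s \<noteq> 0"
  shows "\<not> proj_singular (homog (Xi_poly 2 s)) a b c"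
proof
  have H: "homog (Xi_poly 2 s) x y z = (s * y - z) * (s * y) - x\<^sup>2" for x y z
    by (simp add: homog_Xi_poly[OF assms] xi_form_def xi_centre_def xi_weight_def numeral_2_eq_2)
  assume "proj_singular (homog (Xi_poly 2 s)) a b c"
  then have sing: "(a, b, c) \<noteq> (0, 0, 0)"
      "((\<lambda>x. (s * b - c) * (s * b) - x\<^sup>2) has_field_derivative 0) (at a)"
      "((\<lambda>y. (s * y - c) * (s * y) - a\<^sup>2) has_field_derivative 0) (at b)"
      "((\<lambda>z. (s * b - z) * (s * b) - a\<^sup>2) has_field_derivative 0) (at c)"
    unfolding proj_singular_def H by blast+
  have "((\<lambda>x. (s * b - c) * (s * b) - x\<^sup>2) has_field_derivative - 2 * a) (at a)"
    by (auto intro!: derivative_eq_intros)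
  with sing(2) have a: "a = 0"
    using DERIV_unique by fastforce
  have "((\<lambda>z. (s * b - z) * (s * b) - a\<^sup>2) has_field_derivative - (s * b)) (at c)"
    by (auto intro!: derivative_eq_intros)
  with sing(4) assms have b: "b = 0"
    using DERIV_unique by fastforce
  have "((\<lambda>y. (s * y - c) * (s * y) - a\<^sup>2) has_field_derivative 2 * s * s * b - s * c) (at b)"
    by (auto intro!: derivative_eq_intros simp: algebra_simps)
  with sing(3) assms b have "c = 0"
    using DERIV_unique by fastforce
  with a b sing(1) show False
    by simp
qed

lemma real_sign_obtain:
  assumes "s \<in> {1, -1 :: complex}"
  obtains s' where "s = of_real s'" "s'\<^sup>2 = 1"
  using assms by (auto intro: that[of 1] that[of "-1"])

lemma real_proj_singular_Xi_poly_ge4: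
  assumes "l \<ge> 4" "s \<in> {1, -1}"
  shows "real_proj_singular (Xi_poly l s) a b c \<longleftrightarrow> is_point_1s0 1 a b c \<or> is_point_1s0 (-1) a b c"
proof -
  obtain s' where s': "s = of_real s'" "s'\<^sup>2 = 1"
    using real_sign_obtain[OF assms(2)] .
  then have "(s' * b)\<^sup>2 = b\<^sup>2"
    by (simp add: power_mult_distrib)
  with s' assms(1) show ?thesis
    using real_proj_singular_Xi_poly_iff[OF s'(2), of l a b c]
    by (auto simp: is_point_1s0_def power2_eq_iff)
qed

lemma Xi_poly_affine_smooth:
  assumes "s \<in> {1, -1}" "l \<ge> 1" "aff_eval (Xi_poly l s) (of_real mu) (of_real r) = 0"
  shows "\<not> ((\<lambda>y. aff_eval (Xi_poly l s) (of_real mu) y) has_field_derivative 0) (at (of_real r))"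
proof -
  obtain s' where "s = of_real s'" "s'\<^sup>2 = 1"
    using real_sign_obtain[OF assms(1)] .
  with assms(2,3) show ?thesis
    using Xi_poly_affine_deriv_r_nonzero by blast
qed

theorem proposition3p1:
  shows
  "(\<forall>l\<ge>4. \<forall>s\<in>{1, -1}. \<forall>a b c. real_proj_singular (Xi_poly l s) a b c \<longleftrightarrow>
        (is_point_1s0 1 a b c \<or> is_point_1s0 (-1) a b c))
   \<and> (\<forall>l\<in>{1, 2}. \<forall>s\<in>{1, -1}. \<forall>a b c. \<not> proj_singular (homog (Xi_poly l s)) a b c)
   \<and> (\<forall>a b c. real_proj_singular (Xi_poly 3 1) a b c \<longleftrightarrow> is_point_1s0 (-1) a b c)
   \<and> (\<forall>a b c. real_proj_singular (Xi_poly 3 (-1)) a b c \<longleftrightarrow> is_point_1s0 1 a b c)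
   \<and> (\<forall>l\<ge>1. \<forall>s\<in>{1, -1}. \<forall>mu r :: real.
        aff_eval (Xi_poly l s) (of_real mu) (of_real r) = 0 \<longrightarrow>
        \<not> (((\<lambda>x. aff_eval (Xi_poly l s) x (of_real r)) has_field_derivative 0) (at (of_real mu)) \<and>
             ((\<lambda>y. aff_eval (Xi_poly l s) (of_real mu) y) has_field_derivative 0) (at (of_real r))))"
proof -
  have three: "real_proj_singular (Xi_poly 3 1) a b c \<longleftrightarrow> is_point_1s0 (-1) a b c"
    "real_proj_singular (Xi_poly 3 (-1)) a b c \<longleftrightarrow> is_point_1s0 1 a b c" for a b c
    using real_proj_singular_Xi_poly_iff[of 1 3 a b c] real_proj_singular_Xi_poly_iff[of "-1" 3 a b c]
    by (auto simp: is_point_1s0_def)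
  show ?thesis
    by (intro conjI allI ballI impI)
      (auto simp: three real_proj_singular_Xi_poly_ge4 Xi_poly_affine_smooth
        not_proj_singular_Xi_poly_1 not_proj_singular_Xi_poly_2 simp del: One_nat_def)
qed

end
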